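(* In every $L_{SR}$-structure satisfying AxEv, AxSTL and AxRR: if $\alpha,\beta$ are signals with $\mathrm{Beg}(\alpha)=\mathrm{Beg}(\beta)$ and $\mathrm{End}(\alpha)=\mathrm{End}(\beta)$, then $\alpha=\beta$.
   Context: Language $L_{SR}$: first-order, two-sorted, with sorts "observers" (variables $a,b,c,\dots$) and "signals" (variables $\alpha,\beta,\gamma,\dots$), equality, and binary relation symbols $T$ ("$a$ transmits $\alpha$") and $R$ ("$a$ receives $\alpha$") between observers and signals. Definitions: - $\mathrm{Ev}(\alpha)\equiv\forall a(aT\alpha\Leftrightarrow aR\alpha)$. - $M(a,b)\equiv\exists\alpha(aT\alpha\wedge bT\alpha)$. - $\mathrm{Cop}(a,b)\equiv\exists c,d\,(c\ne d\wedge M(a,c)\wedge M(c,b)\wedge M(d,b)\wedge M(d,a)\wedge\exists\gamma(cT\gamma\wedge dT\gamma\wedge\neg aT\gamma\wedge\neg bT\gamma))$. - $a\|b\equiv(\mathrm{Cop}(a,b)\wedge\neg M(a,b))\vee a=b$. - $\alpha=\mathrm{Beg}(\beta)\equiv\mathrm{Ev}(\alpha)\wedge\forall a(aT\beta\Leftrightarrow aT\alpha)$; $\alpha=\mathrm{End}(\beta)\equiv\mathrm{Ev}(\alpha)\wedge\forall a(aR\beta\Leftrightarrow aT\alpha)$. (Equations such as $\mathrm{Beg}(\alpha)=\mathrm{Beg}(\beta)$ mean there is an event equal to both.) - $\mathrm{STL}(a)\equiv\forall\gamma[\mathrm{Ev}(\gamma)\Rightarrow\exists!\beta(\mathrm{Beg}(\beta)=\gamma\wedge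 aR\beta)]$. Axioms: - AxEv: $\forall\alpha\exists ab\beta\gamma[aT\alpha\wedge bR\alpha\wedge\beta=\mathrm{Beg}(\alpha)\wedge\gamma=\mathrm{End}(\alpha)]$. - AxSTL: $\exists a\,\mathrm{STL}(a)\wedge\forall a,b[\mathrm{STL}(a)\wedge b\|a\Rightarrow\mathrm{STL}(b)]$. - AxRR: $\forall a\beta\exists b(bT\beta\wedge b\|a)$. *)

theory Defs
  imports Main
begin

text \<open>An L_SR-structure: observers of type 'o, signals of type 's,
  relations T (transmits) and R (receives).\<close>

definition Ev :: "('o \<Rightarrow> 's \<Rightarrow> bool) \<Rightarrow> ('o \<Rightarrow> 's \<Rightarrow> bool) \<Rightarrow> 's \<Rightarrow> bool" where
  "Ev T R \<alpha> \<longleftrightarrow> (\<forall>a. T a \<alpha> \<longleftrightarrow> R a \<alpha>)"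

definition M :: "('o \<Rightarrow> 's \<Rightarrow> bool) \<Rightarrow> 'o \<Rightarrow> 'o \<Rightarrow> bool" where
  "M T a b \<longleftrightarrow> (\<exists>\<alpha>. T a \<alpha> \<and> T b \<alpha>)"

definition Cop :: "('o \<Rightarrow> 's \<Rightarrow> bool) \<Rightarrow> 'o \<Rightarrow> 'o \<Rightarrow> bool" where
  "Cop T a b \<longleftrightarrow> (\<exists>c d. c \<noteq> d \<and> M T a c \<and> M T c b \<and> M T d b \<and> M T d a \<and>
     (\<exists>\<gamma>. T c \<gamma> \<and> T d \<gamma> \<and> \<not> T a \<gamma> \<and> \<not> T b \<gamma>))"

definition Par :: "('o \<Rightarrow> 's \<Rightarrow> bool) \<Rightarrow> 'o \<Rightarrow> 'o \<Rightarrow> bool" where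
  "Par T a b \<longleftrightarrow> (Cop T a b \<and> \<not> M T a b) \<or> a = b"

text \<open>IsBeg T R \<alpha> \<beta> formalizes "\<alpha> = Beg(\<beta>)"; IsEnd T R \<alpha> \<beta> formalizes "\<alpha> = End(\<beta>)".\<close>

definition IsBeg :: "('o \<Rightarrow> 's \<Rightarrow> bool) \<Rightarrow> ('o \<Rightarrow> 's \<Rightarrow> bool) \<Rightarrow> 's \<Rightarrow> 's \<Rightarrow> bool" where
  "IsBeg T R \<alpha> \<beta> \<longleftrightarrow> Ev T R \<alpha> \<and> (\<forall>a. T a \<beta> \<longleftrightarrow> T a \<alpha>)"

definition IsEnd :: "('o \<Rightarrow> 's \<Rightarrow> bool) \<Rightarrow> ('o \<Rightarrow> 's \<Rightarrow> bool) \<Rightarrow> 's \<Rightarrow> 's \<Rightarrow> bool" where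
  "IsEnd T R \<alpha> \<beta> \<longleftrightarrow> Ev T R \<alpha> \<and> (\<forall>a. R a \<beta> \<longleftrightarrow> T a \<alpha>)"

definition STL :: "('o \<Rightarrow> 's \<Rightarrow> bool) \<Rightarrow> ('o \<Rightarrow> 's \<Rightarrow> bool) \<Rightarrow> 'o \<Rightarrow> bool" where
  "STL T R a \<longleftrightarrow> (\<forall>\<gamma>. Ev T R \<gamma> \<longrightarrow> (\<exists>!\<beta>. IsBeg T R \<gamma> \<beta> \<and> R a \<beta>))"

definition AxEv :: "('o \<Rightarrow> 's \<Rightarrow> bool) \<Rightarrow> ('o \<Rightarrow> 's \<Rightarrow> bool) \<Rightarrow> bool" where
  "AxEv T R \<longleftrightarrow> (\<forall>\<alpha>. \<exists>a b \<beta> \<gamma>. T a \<alpha> \<and> R b \<alpha> \<and> IsBeg T R \<beta> \<alpha> \<and> IsEnd T R \<gamma> \<alpha>)"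

definition AxSTL :: "('o \<Rightarrow> 's \<Rightarrow> bool) \<Rightarrow> ('o \<Rightarrow> 's \<Rightarrow> bool) \<Rightarrow> bool" where
  "AxSTL T R \<longleftrightarrow> (\<exists>a. STL T R a) \<and> (\<forall>a b. STL T R a \<and> Par T b a \<longrightarrow> STL T R b)"

definition AxRR :: "('o \<Rightarrow> 's \<Rightarrow> bool) \<Rightarrow> bool" where
  "AxRR T \<longleftrightarrow> (\<forall>a \<beta>. \<exists>b. T b \<beta> \<and> Par T b a)"

end

theory Submission
  imports Defs
begin

(* Let alpha, beta share the beginning event gamma and the ending event delta.
   By AxSTL there is a slower-than-light observer a0, and by AxRR some observer b
   parallel to a0 transmits delta; AxSTL transfers the STL property from a0 to b.
   Since b is present at the end event delta, b receives both alpha and beta.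
   But an STL observer receives exactly one signal starting at any given event,
   and both alpha and beta start at gamma, hence alpha = beta. *)

lemma STL_receives_unique:
  assumes "STL T R a"
    and "IsBeg T R \<gamma> \<alpha>" and "IsBeg T R \<gamma> \<beta>"
    and "R a \<alpha>" and "R a \<beta>"
  shows "\<alpha> = \<beta>"
proof -
  have "Ev T R \<gamma>" using assms(2) unfolding IsBeg_def by blast
  then have "\<exists>!\<sigma>. IsBeg T R \<gamma> \<sigma> \<and> R a \<sigma>"
    using assms(1) unfolding STL_def by blast
  then show ?thesis using assms(2-5) by blast
qed

lemma STL_transmitter_exists:
  assumes "AxSTL T R" and "AxRR T"
  shows "\<exists>b. STL T R b \<and> T b \<sigma>"
proof -
  obtain a where a: "STL T R a" using assms(1) unfolding AxSTL_def by blast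
  obtain b where b: "T b \<sigma>" "Par T b a" using assms(2) unfolding AxRR_def by blast
  have "STL T R b" using assms(1) a b(2) unfolding AxSTL_def by blast
  with b(1) show ?thesis by blast
qed

lemma IsEnd_receives:
  assumes "IsEnd T R \<delta> \<alpha>" and "T b \<delta>"
  shows "R b \<alpha>"
  using assms unfolding IsEnd_def by blast

theorem mainTheorem6:
  fixes T R :: "'o \<Rightarrow> 's \<Rightarrow> bool"
  assumes "AxEv T R" and "AxSTL T R" and "AxRR T"
    and "\<exists>\<gamma>. IsBeg T R \<gamma> \<alpha> \<and> IsBeg T R \<gamma> \<beta>"
    and "\<exists>\<delta>. IsEnd T R \<delta> \<alpha> \<and> IsEnd T R \<delta> \<beta>"
  shows "\<alpha> = \<beta>"
proof -
  obtain \<gamma> where beg: "IsBeg T R \<gamma> \<alpha>" "IsBeg T R \<gamma> \<beta>" using assms(4) by blast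
  obtain \<delta> where fin: "IsEnd T R \<delta> \<alpha>" "IsEnd T R \<delta> \<beta>" using assms(5) by blast
  obtain b where b: "STL T R b" "T b \<delta>"
    using STL_transmitter_exists[OF assms(2,3)] by blast
  have "R b \<alpha>" "R b \<beta>"
    using IsEnd_receives[OF fin(1) b(2)] IsEnd_receives[OF fin(2) b(2)] .
  then show ?thesis by (rule STL_receives_unique[OF b(1) beg])
qed

end
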